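(* Let $V$ be an inhomogeneous $Y$-random evolution, $s\in J$ and $\omega \in \Omega$. Then $V(\cdot,\cdot)(\omega)$ is an inhomogeneous $Y$-semigroup. Further, if $V$ is regular, then $u \mapsto V(s,u)(\omega)$ is $Y$-strongly RCLL on $J(s)$, i.e. for every $f \in Y$, $u \mapsto V(s,u)(\omega)f$ belongs to $D(J(s),(Y,\|\cdot\|))$; more precisely, for $f \in Y$, \[ V(s,u^-)f=V(s,u)f \ \text{ if } u \notin \{T_{n}(s): n \in \mathbb{N}\},\qquad V(s, T_{n+1}(s))f= V(s, T_{n+1}(s)^-) D(x_{n}(s),x_{n+1}(s))f \ \ \forall n \in \mathbb{N}, \] where $V(s,t^-)f:=\lim_{u \uparrow t} V(s,u)f$.
   Context: $(Y,\|\cdot\|)$ is a real separable Banach space with Borel $\sigma$-algebra $\mathcal Y$, $(Y_1,\|\cdot\|_{Y_1})$ a real separable Banach space continuously embedded in $Y$; $J$ is $\mathbb{R}^+$ or $[0,T_\infty]$, $\Delta_J=\{(s,t)\in J^2:s\le t\}$, $J(s)=\{t\in J:t\ge s\}$; $D(J(s),Y)$ is the space of right-continuous functions with left limits. An inhomogeneous $Y$-semigroup is a map $\Gamma:\Delta_J\to\mathcal B(Y)$ with $\Gamma(t,t)=I$ and $\Gamma(s,r)\Gamma(r,t)=\Gamma(s,t)$ for $s\le r\le t$. Generator: $\mathcal D(A_\Gamma(t))$ is the set of $f\in Y$ such that $\lim_{h\downarrow0,\,t+h\in J}h^{-1}(\Gamma(t,t+h)-I)f$ and $\lim_{h\downarrow0,\,t-h\in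 J}h^{-1}(\Gamma(t-h,t)-I)f$ exist and are equal ($=A_\Gamma(t)f$), $\mathcal D(A_\Gamma)=\bigcap_t\mathcal D(A_\Gamma(t))$. $\Gamma$ is regular if $Y_1\subseteq\mathcal D(A_\Gamma)$; $\Gamma(s,t)Y_1\subseteq Y_1$ and $u\mapsto\Gamma(u,t)f$ is $\|\cdot\|_{Y_1}$-continuous for $f\in Y_1$; $u\mapsto\Gamma(s,u)f$ is $Y$-continuous on $J(s)$ for $f\in Y$; and $u\mapsto\Gamma(s,u)A_\Gamma(u)f$ is Bochner integrable on $[s,t]$ for $f\in Y_1$. Probabilistic setting: $(\Omega,\mathcal F,\mathbb P)$ complete; $X$ finite with all subsets as $\sigma$-algebra $\mathcal X$; $(x_n,T_n)_{n\ge0}$ a Markov renewal process ($x_n\in X$, $T_0=0$, $T_n=\sum_{k\le n}\tau_k$, $\tau_k>0$) with semi-Markov kernel $Q$; $N(t)=\sup\{n:T_n\le t\}$, $\Omega$ restricted to the full-measure event $\{N(t)<\infty\ \forall t\in\mathbb Q\}$; $x(t)=x_{N(t)}$; $N_s(t)=N(t)-N(s)$, $T_0(s)=s$, $T_n(s)=T_{N(s)+n}$ ($n\ge1$), $x_n(s)=x(T_n(s))$. $(\Gamma_x)_{x\in X}$ inhomogeneous $Y$-semigroups with generators $A_x$, with $(r,t,x,f)\mapsto\Gamma_x(r\wedge t,r\vee t)f$ jointly measurable; $(D(x,y))_{x,y}\subseteq\mathcal B(Y)$ contractions with $(x,y,f)\mapsto D(x,y)f$ measurable. The inhomogeneous $Y$-random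 evolution is $V(s,t)=\big[\prod_{k=1}^{N_s(t)}\Gamma_{x_{k-1}(s)}(T_{k-1}(s),T_k(s))D(x_{k-1}(s),x_k(s))\big]\Gamma_{x(t)}(T_{N_s(t)}(s),t)$ (product ordered left to right, empty product $I$), defined pathwise on $\Delta_J\times\Omega$. $V$ is regular if every $\Gamma_x$ is regular. *)

theory Defs
  imports "HOL-Analysis.Analysis"
begin

text \<open>An inhomogeneous Y-semigroup on the index set J: a map on
  Delta_J = {(s,t) in J^2. s <= t} into bounded operators (values off Delta_J are irrelevant).\<close>
definition inhom_semigroup ::
  "real set \<Rightarrow> (real \<Rightarrow> real \<Rightarrow> ('a::real_normed_vector \<Rightarrow>\<^sub>L 'a)) \<Rightarrow> bool" where
  "inhom_semigroup J G \<longleftrightarrow>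
     (\<forall>t\<in>J. G t t = id_blinfun) \<and>
     (\<forall>s\<in>J. \<forall>r\<in>J. \<forall>t\<in>J. s \<le> r \<and> r \<le> t \<longrightarrow> G s r o\<^sub>L G r t = G s t)"

text \<open>Both one-sided difference quotients converge to L (a one-sided limit whose
  index set is empty, e.g. the left one at t = 0, imposes no condition).\<close>
definition gen_has_limit ::
  "real set \<Rightarrow> (real \<Rightarrow> real \<Rightarrow> ('a::real_normed_vector \<Rightarrow>\<^sub>L 'a)) \<Rightarrow> real \<Rightarrow> 'a \<Rightarrow> 'a \<Rightarrow> bool" where
  "gen_has_limit J G t f L \<longleftrightarrow>
     ((\<lambda>h. (1 / h) *\<^sub>R (G t (t + h) f - f)) \<longlongrightarrow> L) (at 0 within {h. 0 < h \<and> t + h \<in> J}) \<and>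
     ((\<lambda>h. (1 / h) *\<^sub>R (G (t - h) t f - f)) \<longlongrightarrow> L) (at 0 within {h. 0 < h \<and> t - h \<in> J})"

definition gen_dom :: "real set \<Rightarrow> (real \<Rightarrow> real \<Rightarrow> ('a::real_normed_vector \<Rightarrow>\<^sub>L 'a)) \<Rightarrow> real \<Rightarrow> 'a set" where
  "gen_dom J G t = {f. \<exists>L. gen_has_limit J G t f L}"

definition gen_dom_all :: "real set \<Rightarrow> (real \<Rightarrow> real \<Rightarrow> ('a::real_normed_vector \<Rightarrow>\<^sub>L 'a)) \<Rightarrow> 'a set" where
  "gen_dom_all J G = (\<Inter>t\<in>J. gen_dom J G t)"

definition gen :: "real set \<Rightarrow> (real \<Rightarrow> real \<Rightarrow> ('a::real_normed_vector \<Rightarrow>\<^sub>L 'a)) \<Rightarrow> real \<Rightarrow> 'a \<Rightarrow> 'a" where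
  "gen J G t f = (THE L. gen_has_limit J G t f L)"

text \<open>Regularity w.r.t. a Banach space Y1 continuously embedded in Y via the injective
  bounded linear map emb.\<close>
definition regular_semigroup ::
  "real set \<Rightarrow> ('b::real_normed_vector \<Rightarrow>\<^sub>L 'a::{banach,second_countable_topology})
     \<Rightarrow> (real \<Rightarrow> real \<Rightarrow> ('a \<Rightarrow>\<^sub>L 'a)) \<Rightarrow> bool" where
  "regular_semigroup J emb G \<longleftrightarrow>
     range (blinfun_apply emb) \<subseteq> gen_dom_all J G \<and>
     (\<forall>s\<in>J. \<forall>t\<in>J. s \<le> t \<longrightarrow> (\<forall>g. G s t (emb g) \<in> range (blinfun_apply emb))) \<and>
     (\<forall>t\<in>J. \<forall>g. continuous_on {u\<in>J. u \<le> t}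
                  (\<lambda>u. inv (blinfun_apply emb) (G u t (emb g)))) \<and>
     (\<forall>s\<in>J. \<forall>f. continuous_on {u\<in>J. s \<le> u} (\<lambda>u. G s u f)) \<and>
     (\<forall>s\<in>J. \<forall>t\<in>J. s \<le> t \<longrightarrow>
        (\<forall>g. set_integrable lborel {s..t} (\<lambda>u. G s u (gen J G u (emb g)))))"

definition rcll_on :: "real set \<Rightarrow> (real \<Rightarrow> 'a::topological_space) \<Rightarrow> bool" where
  "rcll_on S g \<longleftrightarrow>
     (\<forall>u\<in>S. (g \<longlongrightarrow> g u) (at u within (S \<inter> {u..})) \<and>
             (\<exists>l. (g \<longlongrightarrow> l) (at u within (S \<inter> {..<u}))))"

definition jump_time :: "(nat \<Rightarrow> real) \<Rightarrow> nat \<Rightarrow> real" where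
  "jump_time \<tau> n = (\<Sum>k\<in>{1..n}. \<tau> k)"

definition count_jumps :: "(nat \<Rightarrow> real) \<Rightarrow> real \<Rightarrow> nat" where
  "count_jumps \<tau> t = Sup {n. jump_time \<tau> n \<le> t}"

definition state :: "(nat \<Rightarrow> 'x) \<Rightarrow> (nat \<Rightarrow> real) \<Rightarrow> real \<Rightarrow> 'x" where
  "state xs \<tau> t = xs (count_jumps \<tau> t)"

definition jump_time_from :: "(nat \<Rightarrow> real) \<Rightarrow> real \<Rightarrow> nat \<Rightarrow> real" where
  "jump_time_from \<tau> s n = (if n = 0 then s else jump_time \<tau> (count_jumps \<tau> s + n))"

definition state_from :: "(nat \<Rightarrow> 'x) \<Rightarrow> (nat \<Rightarrow> real) \<Rightarrow> real \<Rightarrow> nat \<Rightarrow> 'x" where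
  "state_from xs \<tau> s n = state xs \<tau> (jump_time_from \<tau> s n)"

fun ordprod :: "nat \<Rightarrow> (nat \<Rightarrow> ('a::real_normed_vector \<Rightarrow>\<^sub>L 'a)) \<Rightarrow> 'a \<Rightarrow>\<^sub>L 'a" where
  "ordprod 0 F = id_blinfun"
| "ordprod (Suc n) F = ordprod n F o\<^sub>L F (Suc n)"

definition random_evolution ::
  "('x \<Rightarrow> real \<Rightarrow> real \<Rightarrow> ('a::real_normed_vector \<Rightarrow>\<^sub>L 'a)) \<Rightarrow> ('x \<Rightarrow> 'x \<Rightarrow> ('a \<Rightarrow>\<^sub>L 'a))
     \<Rightarrow> (nat \<Rightarrow> 'x) \<Rightarrow> (nat \<Rightarrow> real) \<Rightarrow> real \<Rightarrow> real \<Rightarrow> ('a \<Rightarrow>\<^sub>L 'a)" where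
  "random_evolution G D xs \<tau> s t =
     (let m = count_jumps \<tau> t - count_jumps \<tau> s in
      ordprod m (\<lambda>k. G (state_from xs \<tau> s (k - 1)) (jump_time_from \<tau> s (k - 1)) (jump_time_from \<tau> s k)
                      o\<^sub>L D (state_from xs \<tau> s (k - 1)) (state_from xs \<tau> s k))
      o\<^sub>L G (state xs \<tau> t) (jump_time_from \<tau> s m) t)"

end

theory Submission
  imports Defs
begin

text \<open>On each sojourn interval [T_m(s), T_{m+1}(s)) the evolution V(s,u) is a fixed operator,
  the ordered product of the m completed sojourn-and-jump factors, followed by the current
  semigroup G_x(T_m(s), u). The semigroup law therefore reduces to that of the G_x, once the
  sojourn straddling the intermediate time r is merged back into a single factor. Under
  regularity each piece is continuous in u, which gives right continuity everywhere and the
  left limit at T_{m+1}(s) as the value of the previous piece; the two differ exactly by the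
  jump operator D.\<close>

lemma blinfun_compose_assoc: "(a o\<^sub>L b) o\<^sub>L c = a o\<^sub>L (b o\<^sub>L c)"
  by (rule blinfun_eqI) simp

lemma blinfun_compose_id [simp]:
  "id_blinfun o\<^sub>L a = a"
  "a o\<^sub>L id_blinfun = a"
  by (rule blinfun_eqI; simp)+

lemma ordprod_add: "ordprod (m + n) F = ordprod m F o\<^sub>L ordprod n (\<lambda>k. F (m + k))"
  by (induction n) (simp_all add: blinfun_compose_assoc)

lemma ordprod_Suc_left: "ordprod (Suc n) F = F 1 o\<^sub>L ordprod n (\<lambda>k. F (Suc k))"
  using ordprod_add[of 1 n F] by simp

lemma ordprod_cong:
  "(\<And>k. 1 \<le> k \<Longrightarrow> k \<le> n \<Longrightarrow> F k = F' k) \<Longrightarrow> ordprod n F = ordprod n F'"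
  by (induction n) auto

locale renewal_path =
  fixes \<tau> :: "nat \<Rightarrow> real"
  assumes sojourn_pos: "\<forall>k\<ge>1. \<tau> k > 0"
    and finite_jumps_before_rat: "\<forall>q\<in>\<rat>. finite {n. jump_time \<tau> n \<le> q}"
begin

abbreviation "T \<equiv> jump_time \<tau>"
abbreviation "N \<equiv> count_jumps \<tau>"
abbreviation "Ts \<equiv> jump_time_from \<tau>"

lemma jump_time_0: "T 0 = 0"
  by (simp add: jump_time_def)

lemma jump_time_Suc: "T (Suc n) = T n + \<tau> (Suc n)"
  unfolding jump_time_def by (simp add: sum.cl_ivl_Suc)

lemma strict_mono_jump_time: "strict_mono T"
  by (rule strict_mono_Suc_iff[THEN iffD2]) (use sojourn_pos in \<open>auto simp: jump_time_Suc\<close>)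

lemma jump_time_le_iff: "T m \<le> T n \<longleftrightarrow> m \<le> n"
  by (rule strict_mono_less_eq[OF strict_mono_jump_time])

lemma jump_time_less_iff: "T m < T n \<longleftrightarrow> m < n"
  by (rule strict_mono_less[OF strict_mono_jump_time])

lemma jump_time_nonneg: "0 \<le> T n"
  using jump_time_le_iff[of 0 n] jump_time_0 by simp

lemma finite_jumps_before: "finite {n. T n \<le> t}"
proof -
  have "finite {n. T n \<le> of_int \<lceil>t\<rceil>}"
    using finite_jumps_before_rat Rats_of_int by blast
  then show ?thesis
    by (rule finite_subset[rotated]) (auto intro: order_trans le_of_int_ceiling)
qed

lemma jump_time_le_iff_le_count: "0 \<le> t \<Longrightarrow> T n \<le> t \<longleftrightarrow> n \<le> N t"
proof -
  assume "0 \<le> t"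
  let ?S = "{n. T n \<le> t}"
  have "0 \<in> ?S"
    using \<open>0 \<le> t\<close> by (simp add: jump_time_0)
  then have "N t = Max ?S" and "Max ?S \<in> ?S"
    using finite_jumps_before Max_in by (auto simp: count_jumps_def Sup_nat_def)
  then show ?thesis
    using finite_jumps_before jump_time_le_iff[of n "N t"] by auto
qed

lemma jump_time_count_le: "0 \<le> t \<Longrightarrow> T (N t) \<le> t"
  using jump_time_le_iff_le_count by blast

lemma less_jump_time_Suc_count: "0 \<le> t \<Longrightarrow> t < T (Suc (N t))"
  using jump_time_le_iff_le_count[of t "Suc (N t)"] by auto

lemma count_jumps_jump_time: "N (T n) = n"
  using jump_time_le_iff_le_count[OF jump_time_nonneg] jump_time_count_le[OF jump_time_nonneg]
    jump_time_le_iff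
  by (meson order.antisym order.refl)

lemma count_jumps_eqI: "0 \<le> t \<Longrightarrow> T n \<le> t \<Longrightarrow> t < T (Suc n) \<Longrightarrow> N t = n"
  using jump_time_le_iff_le_count[of t n] jump_time_le_iff_le_count[of t "Suc n"] by auto

lemma count_jumps_mono: "0 \<le> s \<Longrightarrow> s \<le> t \<Longrightarrow> N s \<le> N t"
  using jump_time_le_iff_le_count[of t "N s"] jump_time_count_le[of s] by auto

lemma jump_time_from_0 [simp]: "Ts s 0 = s"
  by (simp add: jump_time_from_def)

lemma jump_time_from_pos: "k \<noteq> 0 \<Longrightarrow> Ts s k = T (N s + k)"
  by (simp add: jump_time_from_def)

lemma strict_mono_jump_time_from:
  assumes "0 \<le> s"
  shows "strict_mono (Ts s)"
proof (rule strict_mono_Suc_iff[THEN iffD2], intro allI)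
  show "Ts s n < Ts s (Suc n)" for n
    using less_jump_time_Suc_count[OF assms]
    by (cases n) (simp_all add: jump_time_from_pos jump_time_less_iff)
qed

lemma jump_time_from_le_iff: "0 \<le> s \<Longrightarrow> Ts s k \<le> Ts s l \<longleftrightarrow> k \<le> l"
  using strict_mono_less_eq[OF strict_mono_jump_time_from] by blast

lemma jump_time_from_less_iff: "0 \<le> s \<Longrightarrow> Ts s k < Ts s l \<longleftrightarrow> k < l"
  using strict_mono_less[OF strict_mono_jump_time_from] by blast

lemma jump_time_from_ge: "0 \<le> s \<Longrightarrow> s \<le> Ts s k"
  using jump_time_from_le_iff[of s 0 k] by simp

lemma jump_time_from_count_bracket:
  assumes "0 \<le> s" "s \<le> u"
  shows "Ts s (N u - N s) \<le> u" "u < Ts s (Suc (N u - N s))"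
  using count_jumps_mono[OF assms] jump_time_count_le[of u] less_jump_time_Suc_count[of u] assms
  by (cases "N u - N s = 0"; simp add: jump_time_from_pos)+

lemma count_jumps_between_jump_times:
  assumes "0 \<le> s" "Ts s m \<le> u" "u < Ts s (Suc m)"
  shows "N u = N s + m"
proof (cases m)
  case 0
  then show ?thesis
    using assms jump_time_count_le[of s] by (intro count_jumps_eqI) (auto simp: jump_time_from_pos)
next
  case (Suc k)
  then show ?thesis
    using assms jump_time_nonneg[of "N s + m"] by (intro count_jumps_eqI) (auto simp: jump_time_from_pos)
qed

lemma state_from_eq: "0 \<le> s \<Longrightarrow> state_from xs \<tau> s k = xs (N s + k)"
  by (cases k) (simp_all add: state_from_def state_def jump_time_from_pos count_jumps_jump_time)

lemma jump_time_from_shift: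
  assumes "0 \<le> s" "s \<le> r" "k \<noteq> 0"
  shows "Ts s (N r - N s + k) = Ts r k"
  using count_jumps_mono[OF assms(1,2)] assms(3) by (simp add: jump_time_from_pos)

end

locale random_evolution_path = renewal_path +
  fixes J :: "real set"
    and G :: "'x \<Rightarrow> real \<Rightarrow> real \<Rightarrow> ('a::real_normed_vector \<Rightarrow>\<^sub>L 'a)"
    and D :: "'x \<Rightarrow> 'x \<Rightarrow> ('a \<Rightarrow>\<^sub>L 'a)"
    and xs :: "nat \<Rightarrow> 'x"
  assumes J_nonneg: "J \<subseteq> {0..}"
    and J_interval: "is_interval J"
    and semigroups: "\<And>x. inhom_semigroup J (G x)"
begin

abbreviation "V \<equiv> random_evolution G D xs \<tau>"

definition jump_factor :: "real \<Rightarrow> nat \<Rightarrow> 'a \<Rightarrow>\<^sub>L 'a" where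
  "jump_factor s k = G (xs (N s + (k - 1))) (Ts s (k - 1)) (Ts s k)
                       o\<^sub>L D (xs (N s + (k - 1))) (xs (N s + k))"

definition evolution_after_jumps :: "real \<Rightarrow> nat \<Rightarrow> real \<Rightarrow> 'a \<Rightarrow>\<^sub>L 'a" where
  "evolution_after_jumps s m u = ordprod m (jump_factor s) o\<^sub>L G (xs (N s + m)) (Ts s m) u"

lemma J_between: "a \<in> J \<Longrightarrow> b \<in> J \<Longrightarrow> a \<le> c \<Longrightarrow> c \<le> b \<Longrightarrow> c \<in> J"
  using J_interval unfolding is_interval_1 by blast

lemma semigroup_id: "t \<in> J \<Longrightarrow> G x t t = id_blinfun"
  using semigroups unfolding inhom_semigroup_def by blast

lemma semigroup_compose:
  "a \<in> J \<Longrightarrow> b \<in> J \<Longrightarrow> c \<in> J \<Longrightarrow> a \<le> b \<Longrightarrow> b \<le> c \<Longrightarrow> G x a b o\<^sub>L G x b c = G x a c"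
  using semigroups unfolding inhom_semigroup_def by blast

lemma random_evolution_eq:
  assumes "0 \<le> s" "s \<le> t"
  shows "V s t = evolution_after_jumps s (N t - N s) t"
  using count_jumps_mono[OF assms]
  by (simp add: random_evolution_def evolution_after_jumps_def Let_def jump_factor_def[abs_def]
      state_from_eq[OF assms(1)] state_def)

lemma random_evolution_between_jumps:
  assumes "0 \<le> s" "Ts s m \<le> u" "u < Ts s (Suc m)"
  shows "V s u = evolution_after_jumps s m u"
  using random_evolution_eq[OF assms(1)] jump_time_from_ge[OF assms(1), of m] assms
    count_jumps_between_jump_times[OF assms]
  by simp

lemma jump_factor_shift:
  assumes "0 \<le> s" "s \<le> r" "2 \<le> k"
  shows "jump_factor s (N r - N s + k) = jump_factor r k"
proof -
  have "N s + (N r - N s) = N r"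
    using count_jumps_mono[OF assms(1,2)] by simp
  moreover have "N r - N s + k - 1 = N r - N s + (k - 1)"
    using assms(3) by simp
  ultimately show ?thesis
    using jump_time_from_shift[OF assms(1,2), of k] jump_time_from_shift[OF assms(1,2), of "k - 1"]
      assms(3)
    by (simp add: jump_factor_def add.assoc[symmetric])
qed

text \<open>The sojourn of V(s,\<cdot>) that contains r is split by V(r,\<cdot>) into [T_{m}(s), r] and the
  first sojourn [r, T_1(r)] of V(r,\<cdot>).\<close>
lemma jump_factor_merge:
  assumes "s \<in> J" "r \<in> J" "s \<le> r" "Ts r 1 \<in> J"
  shows "G (xs (N r)) (Ts s (N r - N s)) r o\<^sub>L jump_factor r 1 = jump_factor s (Suc (N r - N s))"
proof -
  let ?m = "N r - N s"
  have s0: "0 \<le> s" and r0: "0 \<le> r"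
    using assms J_nonneg by auto
  have Nr: "N s + ?m = N r"
    using count_jumps_mono[OF s0 assms(3)] by simp
  have "s \<le> Ts s ?m" "Ts s ?m \<le> r"
    using jump_time_from_ge[OF s0] jump_time_from_count_bracket[OF s0 assms(3)] by auto
  then have "Ts s ?m \<in> J"
    using J_between assms(1,2) by blast
  then have "G (xs (N r)) (Ts s ?m) r o\<^sub>L G (xs (N r)) r (Ts r 1) = G (xs (N r)) (Ts s ?m) (Ts r 1)"
    using semigroup_compose assms \<open>Ts s ?m \<le> r\<close> jump_time_from_ge[OF r0] by blast
  then show ?thesis
    using jump_time_from_shift[OF s0 assms(3), of 1] Nr
    by (simp add: jump_factor_def flip: blinfun_compose_assoc)
qed

lemma random_evolution_compose:
  assumes "s \<in> J" "r \<in> J" "t \<in> J" "s \<le> r" "r \<le> t"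
  shows "V s r o\<^sub>L V r t = V s t"
proof -
  have s0: "0 \<le> s" and r0: "0 \<le> r"
    using assms J_nonneg by auto
  define m1 where "m1 = N r - N s"
  define m2 where "m2 = N t - N r"
  have Nr: "N s + m1 = N r" and Nt: "N t - N s = m1 + m2" and Nt': "N r + m2 = N t"
    and Nst: "N s + (m1 + m2) = N t"
    using count_jumps_mono[OF s0 assms(4)] count_jumps_mono[OF r0 assms(5)]
    by (auto simp: m1_def m2_def)
  have V_sr: "V s r = ordprod m1 (jump_factor s) o\<^sub>L G (xs (N r)) (Ts s m1) r"
    using random_evolution_eq[OF s0 assms(4)] Nr by (simp add: evolution_after_jumps_def m1_def)
  have V_rt: "V r t = ordprod m2 (jump_factor r) o\<^sub>L G (xs (N t)) (Ts r m2) t"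
    using random_evolution_eq[OF r0 assms(5)] Nt' by (simp add: evolution_after_jumps_def m2_def)
  have V_st: "V s t = ordprod (m1 + m2) (jump_factor s) o\<^sub>L G (xs (N t)) (Ts s (m1 + m2)) t"
    using random_evolution_eq[OF s0] assms Nt Nst by (simp add: evolution_after_jumps_def)
  show ?thesis
  proof (cases m2)
    case 0
    have "Ts s m1 \<in> J" "Ts s m1 \<le> r"
      using J_between[OF assms(1,2)] jump_time_from_ge[OF s0] jump_time_from_count_bracket[OF s0 assms(4)]
      by (auto simp: m1_def)
    then have "G (xs (N r)) (Ts s m1) r o\<^sub>L G (xs (N r)) r t = G (xs (N r)) (Ts s m1) t"
      using semigroup_compose assms by blast
    then show ?thesis
      using 0 Nt' V_sr V_rt V_st by (simp add: blinfun_compose_assoc)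
  next
    case (Suc m')
    have "Ts r 1 \<le> t"
      using jump_time_from_le_iff[OF r0, of 1 m2] jump_time_from_count_bracket[OF r0 assms(5)] Suc
      by (simp add: m2_def)
    then have "Ts r 1 \<in> J"
      using J_between[OF assms(2,3)] jump_time_from_ge[OF r0] by blast
    then have merge: "G (xs (N r)) (Ts s m1) r o\<^sub>L jump_factor r 1 = jump_factor s (Suc m1)"
      using jump_factor_merge assms by (simp add: m1_def)
    have tail: "ordprod m' (\<lambda>k. jump_factor s (m1 + Suc k)) = ordprod m' (\<lambda>k. jump_factor r (Suc k))"
    proof (rule ordprod_cong)
      show "jump_factor s (m1 + Suc k) = jump_factor r (Suc k)" if "1 \<le> k" for k
        using jump_factor_shift[OF s0 assms(4), of "Suc k"] that by (simp add: m1_def)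
    qed
    have "ordprod (m1 + m2) (jump_factor s)
        = ordprod m1 (jump_factor s) o\<^sub>L (jump_factor s (Suc m1) o\<^sub>L ordprod m' (\<lambda>k. jump_factor r (Suc k)))"
      unfolding Suc ordprod_add ordprod_Suc_left[of m' "\<lambda>k. jump_factor s (m1 + k)"] tail by simp
    moreover have "ordprod m2 (jump_factor r) = jump_factor r 1 o\<^sub>L ordprod m' (\<lambda>k. jump_factor r (Suc k))"
      using ordprod_Suc_left Suc by simp
    moreover have "Ts s (m1 + m2) = Ts r m2"
      using jump_time_from_shift[OF s0 assms(4), of m2] Suc by (simp add: m1_def)
    ultimately show ?thesis
      unfolding V_sr V_rt V_st by (simp add: blinfun_compose_assoc flip: merge)
  qed
qed

lemma inhom_semigroup_random_evolution: "inhom_semigroup J V"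
  unfolding inhom_semigroup_def
proof (intro conjI ballI impI)
  show "V t t = id_blinfun" if "t \<in> J" for t
    using that J_nonneg random_evolution_eq[of t t] semigroup_id
    by (auto simp: evolution_after_jumps_def)
  show "V s r o\<^sub>L V r t = V s t" if "s \<in> J" "r \<in> J" "t \<in> J" "s \<le> r \<and> r \<le> t" for s r t
    using random_evolution_compose that by blast
qed


context
  assumes continuous_orbits: "\<And>x a f. a \<in> J \<Longrightarrow> continuous_on {u\<in>J. a \<le> u} (\<lambda>u. G x a u f)"
begin

lemma random_evolution_tendsto_within_sojourn:
  assumes "s \<in> J" "u \<in> J" "Ts s m \<le> u"
    and R: "R \<subseteq> {v\<in>J. Ts s m \<le> v \<and> v < Ts s (Suc m)}"
  shows "((\<lambda>v. V s v f) \<longlongrightarrow> evolution_after_jumps s m u f) (at u within R)"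
proof -
  have s0: "0 \<le> s"
    using assms J_nonneg by auto
  have "Ts s m \<in> J"
    using J_between[OF assms(1,2)] jump_time_from_ge[OF s0] assms(3) by blast
  then have "continuous_on {v\<in>J. Ts s m \<le> v} (\<lambda>v. evolution_after_jumps s m v f)"
    unfolding evolution_after_jumps_def blinfun_apply_blinfun_compose
    by (intro bounded_linear.continuous_on[OF blinfun.bounded_linear_right] continuous_orbits)
  then have "((\<lambda>v. evolution_after_jumps s m v f) \<longlongrightarrow> evolution_after_jumps s m u f)
      (at u within R)"
    using assms(2,3) R by (auto simp: continuous_on_def intro: tendsto_within_subset)
  moreover have "\<forall>\<^sub>F v in at u within R. evolution_after_jumps s m v f = V s v f"
    unfolding eventually_at_filter
    by (rule always_eventually) (use random_evolution_between_jumps[OF s0] R in auto)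
  ultimately show ?thesis
    using tendsto_cong by fast
qed

lemma random_evolution_continuous_from_right:
  assumes "s \<in> J" "u \<in> J" "s \<le> u"
  shows "((\<lambda>v. V s v f) \<longlongrightarrow> V s u f) (at u within {v\<in>J. s \<le> v} \<inter> {u..})"
proof -
  have s0: "0 \<le> s"
    using assms J_nonneg by auto
  define m where "m = N u - N s"
  have bracket: "Ts s m \<le> u" "u < Ts s (Suc m)"
    using jump_time_from_count_bracket[OF s0 assms(3)] by (simp_all add: m_def)
  have "at u within {v\<in>J. s \<le> v} \<inter> {u..} = at u within {v\<in>J. u \<le> v \<and> v < Ts s (Suc m)}"
    using assms(3) bracket by (intro at_within_nhd[of _ "{..<Ts s (Suc m)}"]) auto
  moreover have "((\<lambda>v. V s v f) \<longlongrightarrow> evolution_after_jumps s m u f)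
      (at u within {v\<in>J. u \<le> v \<and> v < Ts s (Suc m)})"
    using bracket(1) by (intro random_evolution_tendsto_within_sojourn[OF assms(1,2) bracket(1)]) auto
  ultimately show ?thesis
    using random_evolution_between_jumps[OF s0 bracket] by simp
qed

lemma random_evolution_tendsto_from_left:
  assumes "s \<in> J" "u \<in> J" "Ts s m < u" "u \<le> Ts s (Suc m)"
  shows "((\<lambda>v. V s v f) \<longlongrightarrow> evolution_after_jumps s m u f) (at u within {v\<in>J. s \<le> v \<and> v < u})"
proof -
  have "s \<le> Ts s m"
    using assms J_nonneg jump_time_from_ge by auto
  then have "at u within {v\<in>J. s \<le> v \<and> v < u} = at u within {v\<in>J. Ts s m \<le> v \<and> v < u}"
    using assms(3) by (intro at_within_nhd[of _ "{Ts s m<..}"]) auto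
  moreover have "((\<lambda>v. V s v f) \<longlongrightarrow> evolution_after_jumps s m u f)
      (at u within {v\<in>J. Ts s m \<le> v \<and> v < u})"
    using assms(3,4) by (intro random_evolution_tendsto_within_sojourn[OF assms(1,2)]) auto
  ultimately show ?thesis
    by simp
qed

lemma rcll_on_random_evolution:
  assumes "s \<in> J"
  shows "rcll_on {u\<in>J. s \<le> u} (\<lambda>u. V s u f)"
  unfolding rcll_on_def
proof (intro ballI conjI)
  fix u assume "u \<in> {u\<in>J. s \<le> u}"
  then have u: "u \<in> J" "s \<le> u"
    by auto
  then show "((\<lambda>u. V s u f) \<longlongrightarrow> V s u f) (at u within {u\<in>J. s \<le> u} \<inter> {u..})"
    using random_evolution_continuous_from_right[OF assms] by blast
  have s0: "0 \<le> s"
    using assms J_nonneg by auto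
  have set_eq: "{u\<in>J. s \<le> u} \<inter> {..<u} = {v\<in>J. s \<le> v \<and> v < u}"
    by auto
  define m where "m = N u - N s"
  have bracket: "Ts s m \<le> u" "u < Ts s (Suc m)"
    using jump_time_from_count_bracket[OF s0 u(2)] by (simp_all add: m_def)
  consider "Ts s m < u" | "m = 0" "Ts s m = u" | m' where "m = Suc m'" "Ts s m = u"
    using bracket(1) by (cases m) force+
  then show "\<exists>l. ((\<lambda>u. V s u f) \<longlongrightarrow> l) (at u within {u\<in>J. s \<le> u} \<inter> {..<u})"
  proof cases
    case 1
    then show ?thesis
      using random_evolution_tendsto_from_left[OF assms u(1) _ less_imp_le[OF bracket(2)]]
      unfolding set_eq by blast
  next
    case 2
    then have "{v\<in>J. s \<le> v \<and> v < u} = {}"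
      by auto
    then show ?thesis
      unfolding set_eq by (metis at_within_empty tendsto_bot)
  next
    case 3
    then have "Ts s m' < u" "u \<le> Ts s (Suc m')"
      using jump_time_from_less_iff[OF s0, of m' m] by auto
    then show ?thesis
      using random_evolution_tendsto_from_left[OF assms u(1)] unfolding set_eq by blast
  qed
qed


lemma random_evolution_continuous_from_left:
  assumes "s \<in> J" "u \<in> J" "s < u" "u \<notin> range (Ts s)"
  shows "((\<lambda>v. V s v f) \<longlongrightarrow> V s u f) (at u within {v\<in>J. s \<le> v \<and> v < u})"
proof -
  have s0: "0 \<le> s"
    using assms J_nonneg by auto
  define m where "m = N u - N s"
  have bracket: "Ts s m \<le> u" "u < Ts s (Suc m)"
    using jump_time_from_count_bracket[OF s0] assms(3) by (simp_all add: m_def)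
  moreover have "Ts s m \<noteq> u"
    using assms(4) by blast
  ultimately show ?thesis
    using random_evolution_tendsto_from_left[OF assms(1,2)] random_evolution_between_jumps[OF s0]
    by simp
qed

lemma random_evolution_left_limit_at_jump:
  assumes "s \<in> J" "Ts s (Suc n) \<in> J"
  shows "((\<lambda>v. V s v (D (state_from xs \<tau> s n) (state_from xs \<tau> s (Suc n)) f))
            \<longlongrightarrow> V s (Ts s (Suc n)) f)
           (at (Ts s (Suc n)) within {v\<in>J. s \<le> v \<and> v < Ts s (Suc n)})"
proof -
  let ?u = "Ts s (Suc n)"
  have s0: "0 \<le> s"
    using assms J_nonneg by auto
  have "V s ?u = evolution_after_jumps s (Suc n) ?u"
    using random_evolution_between_jumps[OF s0] jump_time_from_less_iff[OF s0] by simp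
  also have "\<dots> = evolution_after_jumps s n ?u o\<^sub>L D (xs (N s + n)) (xs (N s + Suc n))"
    using semigroup_id[OF assms(2)]
    by (simp add: evolution_after_jumps_def jump_factor_def blinfun_compose_assoc)
  finally show ?thesis
    using random_evolution_tendsto_from_left[OF assms] jump_time_from_less_iff[OF s0]
    by (simp add: state_from_eq[OF s0])
qed

end

end

theorem proposition3p3:
  fixes J :: "real set"
    and emb :: "'y1::{banach,second_countable_topology} \<Rightarrow>\<^sub>L 'y::{banach,second_countable_topology}"
    and G :: "'x::finite \<Rightarrow> real \<Rightarrow> real \<Rightarrow> ('y \<Rightarrow>\<^sub>L 'y)"
    and D :: "'x \<Rightarrow> 'x \<Rightarrow> ('y \<Rightarrow>\<^sub>L 'y)"
    and xs :: "nat \<Rightarrow> 'x"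
    and \<tau> :: "nat \<Rightarrow> real"
    and s :: real
  assumes J: "J = {0..} \<or> (\<exists>Tinf>0. J = {0..Tinf})"
    and emb_inj: "inj (blinfun_apply emb)"
    and G_sg: "\<forall>x. inhom_semigroup J (G x)"
    and G_meas: "(\<lambda>(r, t, x, f). G x (min r t) (max r t) f) \<in> borel_measurable
                   (restrict_space borel J \<Otimes>\<^sub>M restrict_space borel J \<Otimes>\<^sub>M count_space UNIV \<Otimes>\<^sub>M borel)"
    and D_contr: "\<forall>x y. norm (D x y) \<le> 1"
    and D_meas: "(\<lambda>(x, y, f). D x y f) \<in> borel_measurable
                   (count_space UNIV \<Otimes>\<^sub>M count_space UNIV \<Otimes>\<^sub>M borel)"
    and tau_pos: "\<forall>k\<ge>1. \<tau> k > 0"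
    and N_finite: "\<forall>q\<in>\<rat>. finite {n. jump_time \<tau> n \<le> q}"
    and s: "s \<in> J"
  shows "inhom_semigroup J (random_evolution G D xs \<tau>) \<and>
         ((\<forall>x. regular_semigroup J emb (G x)) \<longrightarrow>
            (\<forall>f. rcll_on {u\<in>J. s \<le> u} (\<lambda>u. random_evolution G D xs \<tau> s u f)) \<and>
            (\<forall>f. \<forall>u\<in>J. s < u \<and> u \<notin> range (jump_time_from \<tau> s) \<longrightarrow>
               ((\<lambda>v. random_evolution G D xs \<tau> s v f) \<longlongrightarrow> random_evolution G D xs \<tau> s u f)
                 (at u within {v\<in>J. s \<le> v \<and> v < u})) \<and>
            (\<forall>f n. jump_time_from \<tau> s (Suc n) \<in> J \<longrightarrow>
               ((\<lambda>v. random_evolution G D xs \<tau> s v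
                        (D (state_from xs \<tau> s n) (state_from xs \<tau> s (Suc n)) f))
                  \<longlongrightarrow> random_evolution G D xs \<tau> s (jump_time_from \<tau> s (Suc n)) f)
                 (at (jump_time_from \<tau> s (Suc n)) within {v\<in>J. s \<le> v \<and> v < jump_time_from \<tau> s (Suc n)})))"
proof -
  interpret random_evolution_path \<tau> J G D xs
    using J tau_pos N_finite G_sg by unfold_locales (auto simp: is_interval_1)
  have "(\<forall>f. rcll_on {u\<in>J. s \<le> u} (\<lambda>u. V s u f)) \<and>
        (\<forall>f. \<forall>u\<in>J. s < u \<and> u \<notin> range (Ts s) \<longrightarrow>
           ((\<lambda>v. V s v f) \<longlongrightarrow> V s u f) (at u within {v\<in>J. s \<le> v \<and> v < u})) \<and>
        (\<forall>f n. Ts s (Suc n) \<in> J \<longrightarrow>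
           ((\<lambda>v. V s v (D (state_from xs \<tau> s n) (state_from xs \<tau> s (Suc n)) f))
              \<longlongrightarrow> V s (Ts s (Suc n)) f) (at (Ts s (Suc n)) within {v\<in>J. s \<le> v \<and> v < Ts s (Suc n)}))"
    if "\<forall>x. regular_semigroup J emb (G x)"
  proof -
    have "\<And>x a f. a \<in> J \<Longrightarrow> continuous_on {u\<in>J. a \<le> u} (\<lambda>u. G x a u f)"
      using that unfolding regular_semigroup_def by blast
    then show ?thesis
      using rcll_on_random_evolution random_evolution_continuous_from_left
        random_evolution_left_limit_at_jump s
      by blast
  qed
  then show ?thesis
    using inhom_semigroup_random_evolution by blast
qed

end
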